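(* For each class $X\in\{\mathrm{sing},\mathrm{cont},\mathrm{op},\mathrm{clos}\}$ choose independently a pair $(\alpha_X,\beta_X)\in\{(2,1),(1,2)\}$ (16 choices in all). Then for every $n\ge1$, $$\sum_{\sigma\in S_n} q^{\,n-\mathrm{run}(\sigma)+\sum_{X}\left(\alpha_X\,\mathrm{lsg}(X)(\sigma)+\beta_X\,\mathrm{rsg}(X)(\sigma)\right)}=[n]_q!.$$
   Context: $[n]_q=\frac{1-q^n}{1-q}$, $[n]_q!=[n]_q\cdots[1]_q$. A permutation $\sigma\in S_n$ is written as the word $\sigma(1)\cdots\sigma(n)$; its runs are the maximal contiguous increasing segments, $\mathrm{run}(\sigma)$ is their number. A run of length $\ge2$ is proper, of length 1 is a singleton run. Classes: $\mathrm{op}(\sigma)$ = first elements of proper runs, $\mathrm{clos}(\sigma)$ = last elements of proper runs, $\mathrm{sing}(\sigma)$ = elements forming singleton runs, $\mathrm{cont}(\sigma)$ = all other elements. For $i\in\{1,\dots,n\}$, $\mathrm{lsg}(i)$ is the number of runs lying strictly to the left of $i$ (not containing $i$) that contain both an element smaller and an element greater than $i$; $\mathrm{rsg}(i)$ is the analogous number to the right. $\mathrm{lsg}(X)(\sigma)=\sum_{i\in X(\sigma)}\mathrm{lsg}(i)$, $\mathrm{rsg}(X)(\sigma)=\sum_{i\in X(\sigma)}\mathrm{rsg}(i)$. *)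

theory Defs
  imports Main "HOL-Combinatorics.Multiset_Permutations"
begin

text \<open>q-integers and q-factorials, written polynomially:
  [n]_q = (1 - q^n)/(1 - q) = 1 + q + ... + q^(n-1).\<close>
definition q_int :: "nat \<Rightarrow> 'a::comm_ring_1 \<Rightarrow> 'a" where
  "q_int n q = (\<Sum>i<n. q ^ i)"

definition q_fact :: "nat \<Rightarrow> 'a::comm_ring_1 \<Rightarrow> 'a" where
  "q_fact n q = (\<Prod>k\<in>{1..n}. q_int k q)"

fun runs :: "nat list \<Rightarrow> nat list list" where
  "runs [] = []"
| "runs [x] = [[x]]"
| "runs (x # y # zs) =
     (if x < y then (case runs (y # zs) of [] \<Rightarrow> [[x]] | r # rs \<Rightarrow> (x # r) # rs)
      else [x] # runs (y # zs))"

definition run :: "nat list \<Rightarrow> nat" where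
  "run \<sigma> = length (runs \<sigma>)"

definition run_idx :: "nat list \<Rightarrow> nat \<Rightarrow> nat" where
  "run_idx \<sigma> i = (THE k. k < length (runs \<sigma>) \<and> i \<in> set (runs \<sigma> ! k))"

definition separates :: "nat list \<Rightarrow> nat \<Rightarrow> bool" where
  "separates r i \<longleftrightarrow> (\<exists>a\<in>set r. a < i) \<and> (\<exists>b\<in>set r. i < b)"

definition lsg :: "nat list \<Rightarrow> nat \<Rightarrow> nat" where
  "lsg \<sigma> i = card {j. j < run_idx \<sigma> i \<and> separates (runs \<sigma> ! j) i}"

definition rsg :: "nat list \<Rightarrow> nat \<Rightarrow> nat" where
  "rsg \<sigma> i = card {j. run_idx \<sigma> i < j \<and> j < length (runs \<sigma>) \<and> separates (runs \<sigma> ! j) i}"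

datatype rclass = Sing | Cont | Op | Clos

definition class_set :: "rclass \<Rightarrow> nat list \<Rightarrow> nat set" where
  "class_set X \<sigma> = (case X of
      Op \<Rightarrow> {hd r | r. r \<in> set (runs \<sigma>) \<and> length r \<ge> 2}
    | Clos \<Rightarrow> {last r | r. r \<in> set (runs \<sigma>) \<and> length r \<ge> 2}
    | Sing \<Rightarrow> {hd r | r. r \<in> set (runs \<sigma>) \<and> length r = 1}
    | Cont \<Rightarrow> set \<sigma> - ({hd r | r. r \<in> set (runs \<sigma>) \<and> length r \<ge> 2}
                      \<union> {last r | r. r \<in> set (runs \<sigma>) \<and> length r \<ge> 2}
                      \<union> {hd r | r. r \<in> set (runs \<sigma>) \<and> length r = 1}))"

definition lsgX :: "rclass \<Rightarrow> nat list \<Rightarrow> nat" where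
  "lsgX X \<sigma> = (\<Sum>i\<in>class_set X \<sigma>. lsg \<sigma> i)"

definition rsgX :: "rclass \<Rightarrow> nat list \<Rightarrow> nat" where
  "rsgX X \<sigma> = (\<Sum>i\<in>class_set X \<sigma>. rsg \<sigma> i)"

end

theory Submission
  imports Defs
begin

(* Build the permutation by inserting the values 1, ..., n in increasing order. At each stage
   the word built so far is cut into blocks, the traces of the runs of the final permutation; a
   block is open if its run will still receive larger values at its right end. Every boundary
   that is not a descent follows an open block, so with h open blocks the new largest value either
   starts a new block, open or closed, in one of h + 1 places, or is appended to one of the h open
   blocks, which then stays open or closes.

   The class of a value and the runs that will separate it are fixed when the value is inserted:
   an open block will separate it iff it already contains a smaller value. So the exponent is
   accumulated along the construction, and the new value contributes alpha_X g + beta_X (h - g),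
   g counting the open blocks to its left. For (alpha_X, beta_X) in {(2,1), (1,2)} these terms
   sum to q^h [h+1]_q, and to q^h [h]_q for appended values (whose run grows by one). Hence the
   weighted number of ways to complete a stage depends only on the number k of values still to
   come and on h, and solves a recursion whose value at h = 0 is [k]_q!. At q = 1 the same
   identity counts the stages, which shows that each permutation is produced exactly once. *)

section \<open>q-factorials\<close>

lemma q_int_0 [simp]: "q_int 0 q = 0"
  by (simp add: q_int_def)

lemma q_int_Suc_0 [simp]: "q_int (Suc 0) q = 1"
  by (simp add: q_int_def)

lemma q_int_Suc: "q_int (Suc k) q = 1 + q * q_int k q"
  unfolding q_int_def sum.lessThan_Suc_shift by (simp add: sum_distrib_left)

lemma q_fact_Suc: "q_fact (Suc k) q = q_int (Suc k) q * q_fact k q"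
  unfolding q_fact_def by (simp add: atLeastAtMostSuc_conv)

lemma q_fact_1: "q_fact n (1 :: 'a::comm_ring_1) = of_nat (fact n)"
  by (induction n) (simp_all add: q_fact_Suc q_int_def q_fact_def algebra_simps)

text \<open>The weighted number of ways to finish a stage with \<open>h\<close> open blocks by \<open>k\<close> further
  values; in closed form it is \<open>[k]\<^sub>q! q\<^bsup>h(h+1)/2\<^esup> [k choose h]\<^sub>q\<close>.\<close>
fun completions :: "'a::comm_ring_1 \<Rightarrow> nat \<Rightarrow> nat \<Rightarrow> 'a" where
  "completions q 0 h = (if h = 0 then 1 else 0)"
| "completions q (Suc k) 0 = q_int (Suc k) q * completions q k 0"
| "completions q (Suc k) (Suc h) =
     q_int (Suc k) q * q ^ Suc h * (completions q k (Suc h) + completions q k h)"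

lemma completions_0_right: "completions q n 0 = q_fact n q"
  by (induction n) (simp_all add: q_fact_def q_fact_Suc)

lemma completions_absorb:
  "q_int (Suc h) q * (completions q k (Suc h) + completions q k h) = q_int (Suc k) q * completions q k h"
proof (induction k arbitrary: h)
  case 0
  show ?case by (cases h) (simp_all add: q_int_def)
next
  case (Suc k)
  show ?case
  proof (cases h)
    case 0
    then show ?thesis using Suc.IH[of 0]
      by (simp add: q_int_Suc[of "Suc k"] algebra_simps)
  next
    case (Suc h')
    let ?c = "completions q k"
    have "q_int (Suc h) q * (completions q (Suc k) (Suc h) + completions q (Suc k) h)
        = q_int (Suc k) q * (q ^ Suc h * (q_int (Suc h) q * (?c (Suc h) + ?c h))
                              + q_int (Suc h) q * q ^ h * (?c h + ?c h'))"
      using Suc by (simp add: algebra_simps)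
    also have "\<dots> = q_int (Suc k) q * (q ^ Suc h * (q_int (Suc k) q * ?c h)
                              + q_int (Suc h) q * q ^ h * (?c h + ?c h'))"
      using Suc.IH[of h] by simp
    also have "\<dots> = q_int (Suc k) q * (q ^ Suc h * (q_int (Suc k) q * ?c h)
                              + q ^ h * (?c h + ?c h') + q ^ Suc h * (q_int h q * (?c h + ?c h')))"
      by (simp add: q_int_Suc[of h q] algebra_simps)
    also have "\<dots> = q_int (Suc (Suc k)) q * completions q (Suc k) h"
      using Suc.IH[of h'] Suc by (simp add: q_int_Suc[of "Suc k" q] algebra_simps)
    finally show ?thesis .
  qed
qed

text \<open>The two terms correspond to a new block (open or closed) and to an appended value
  (keeping the block open or closing it).\<close>
lemma completions_step:
  "completions q (Suc k) h = q ^ h * q_int (Suc h) q * (completions q k (Suc h) + completions q k h)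
     + q ^ h * q_int h q * (completions q k h + completions q k (h - 1))"
proof (cases h)
  case 0
  then show ?thesis using completions_absorb[of 0 q k] by (simp add: q_int_def)
next
  case (Suc h')
  have "completions q (Suc k) h
      = q ^ h * (q_int (Suc k) q * completions q k h) + q ^ h * (q_int (Suc k) q * completions q k h')"
    using Suc by (simp add: algebra_simps)
  also have "\<dots> = q ^ h * (q_int (Suc h) q * (completions q k (Suc h) + completions q k h))
      + q ^ h * (q_int h q * (completions q k h + completions q k h'))"
    using completions_absorb[of h q k] completions_absorb[of h' q k] Suc by simp
  finally show ?thesis
    using Suc by (simp add: mult.assoc)
qed

section \<open>Building permutations by inserting the largest value\<close>

type_synonym block = "nat list \<times> bool"

definition word :: "block list \<Rightarrow> nat list" where
  "word s = concat (map fst s)"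

definition open_blocks :: "block list \<Rightarrow> nat" where
  "open_blocks s = length (filter snd s)"

lemma word_simps [simp]:
  "word [] = []" "word (S # s) = fst S @ word s" "word (s @ t) = word s @ word t"
  by (simp_all add: word_def)

lemma open_blocks_simps [simp]:
  "open_blocks [] = 0" "open_blocks (S # s) = of_bool (snd S) + open_blocks s"
  "open_blocks (s @ t) = open_blocks s + open_blocks t"
  by (simp_all add: open_blocks_def)

lemma open_blocks_eq_0_iff: "open_blocks s = 0 \<longleftrightarrow> (\<forall>S\<in>set s. \<not> snd S)"
  by (simp add: open_blocks_def filter_empty_conv)

fun linked :: "block list \<Rightarrow> bool" where
  "linked (S # T # s) \<longleftrightarrow> (snd S \<or> hd (fst T) < last (fst S)) \<and> linked (T # s)"
| "linked _ \<longleftrightarrow> True"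

lemma linked_Cons:
  "linked (S # s) \<longleftrightarrow> linked s \<and> (s = [] \<or> snd S \<or> hd (fst (hd s)) < last (fst S))"
  by (cases s) auto

lemma linked_append: "linked (s @ t) \<longleftrightarrow> linked s \<and> linked t \<and>
   (s = [] \<or> t = [] \<or> snd (last s) \<or> hd (fst (hd t)) < last (fst (last s)))"
  by (induction s) (auto simp: linked_Cons)

text \<open>A stage of the construction. The flag \<open>True\<close> marks an open block, which will still
  receive larger values at its right end.\<close>
definition config :: "nat \<Rightarrow> block list \<Rightarrow> bool" where
  "config m s \<longleftrightarrow> distinct (word s) \<and> set (word s) = {1..m} \<and>
     (\<forall>S\<in>set s. fst S \<noteq> [] \<and> sorted_wrt (<) (fst S)) \<and> linked s"

fun insert_block :: "block \<Rightarrow> nat \<Rightarrow> block list \<Rightarrow> block list" where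
  "insert_block N 0 s = N # s"
| "insert_block N (Suc g) [] = [N]"
| "insert_block N (Suc g) (S # s) =
     S # (if snd S then insert_block N g s else insert_block N (Suc g) s)"

fun extend_block :: "nat \<Rightarrow> bool \<Rightarrow> nat \<Rightarrow> block list \<Rightarrow> block list" where
  "extend_block v b j [] = []"
| "extend_block v b j (S # s) =
     (if \<not> snd S then S # extend_block v b j s
      else if j = 0 then (fst S @ [v], b) # s
      else S # extend_block v b (j - 1) s)"

text \<open>A new block goes to the front or right after an open block: behind a closed block it
  would form an ascent with it.\<close>
definition children :: "block list \<Rightarrow> nat \<Rightarrow> block list list" where
  "children s v =
     map (\<lambda>g. insert_block ([v], True) g s) [0..<Suc (open_blocks s)]
     @ map (\<lambda>g. insert_block ([v], False) g s) [0..<Suc (open_blocks s)]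
     @ map (\<lambda>j. extend_block v True j s) [0..<open_blocks s]
     @ map (\<lambda>j. extend_block v False j s) [0..<open_blocks s]"

fun configs :: "nat \<Rightarrow> block list list" where
  "configs 0 = [[]]"
| "configs (Suc m) = concat (map (\<lambda>s. children s (Suc m)) (configs m))"

lemma in_children_iff: "t \<in> set (children s v) \<longleftrightarrow>
    (\<exists>a. \<exists>g\<le>open_blocks s. t = insert_block ([v], a) g s)
  \<or> (\<exists>b. \<exists>j<open_blocks s. t = extend_block v b j s)"
  unfolding children_def by (simp add: ex_bool_eq image_iff Bex_def less_Suc_eq_le del: upt_Suc)

lemma insert_block_in_children:
  "g \<le> open_blocks s \<Longrightarrow> insert_block ([v], a) g s \<in> set (children s v)"
  by (auto simp: in_children_iff)

lemma extend_block_in_children: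
  "j < open_blocks s \<Longrightarrow> extend_block v b j s \<in> set (children s v)"
  by (auto simp: in_children_iff)

lemma insert_block_split:
  assumes "g \<le> open_blocks s"
  obtains pre post where "s = pre @ post" "insert_block N g s = pre @ N # post"
    "open_blocks pre = g" "pre = [] \<or> snd (last pre)"
  using assms
proof (induction N g s arbitrary: thesis rule: insert_block.induct)
  case (1 N s)
  then show ?case by (intro "1.prems"(1)[of "[]" s]) simp_all
next
  case (2 N g)
  then show ?case by simp
next
  case (3 N g S s)
  show ?case
  proof (cases "snd S")
    case True
    with "3.prems"(2) obtain pre post where "s = pre @ post" "insert_block N g s = pre @ N # post"
      "open_blocks pre = g" "pre = [] \<or> snd (last pre)"
      by (auto intro: "3.IH"(1))
    with True show ?thesis by (intro "3.prems"(1)[of "S # pre" post]) auto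
  next
    case False
    with "3.prems"(2) obtain pre post where "s = pre @ post"
      "insert_block N (Suc g) s = pre @ N # post" "open_blocks pre = Suc g" "pre = [] \<or> snd (last pre)"
      by (auto intro: "3.IH"(2))
    with False show ?thesis by (intro "3.prems"(1)[of "S # pre" post]) auto
  qed
qed

lemma insert_block_at:
  "pre = [] \<or> snd (last pre) \<Longrightarrow> insert_block N (open_blocks pre) (pre @ post) = pre @ N # post"
proof (induction pre)
  case (Cons S pre)
  show ?case
  proof (cases "snd S")
    case True
    with Cons show ?thesis by (cases pre) auto
  next
    case False
    with Cons.prems have "pre \<noteq> []" "snd (last pre)" by (auto split: if_splits)
    then have "open_blocks pre \<noteq> 0" by (metis last_in_set open_blocks_eq_0_iff)
    with Cons False \<open>snd (last pre)\<close> show ?thesis by (cases "open_blocks pre") auto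
  qed
qed simp

lemma extend_block_split:
  assumes "j < open_blocks s"
  obtains pre Q post where "s = pre @ (Q, True) # post"
    "extend_block v b j s = pre @ (Q @ [v], b) # post" "open_blocks pre = j"
  using assms
proof (induction v b j s arbitrary: thesis rule: extend_block.induct)
  case (1 v b j)
  then show ?case by simp
next
  case (2 v b j S s)
  show ?case
  proof (cases "snd S")
    case False
    with "2.prems"(2) obtain pre Q post where "s = pre @ (Q, True) # post"
      "extend_block v b j s = pre @ (Q @ [v], b) # post" "open_blocks pre = j"
      by (auto intro: "2.IH"(1))
    with False show ?thesis by (intro "2.prems"(1)[of "S # pre" Q post]) auto
  next
    case True
    show ?thesis
    proof (cases "j = 0")
      case True
      with \<open>snd S\<close> show ?thesis by (intro "2.prems"(1)[of "[]" "fst S" s]) (cases S, auto)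
    next
      case False
      with True "2.prems"(2) obtain pre Q post where "s = pre @ (Q, True) # post"
        "extend_block v b (j - 1) s = pre @ (Q @ [v], b) # post" "open_blocks pre = j - 1"
        by (auto intro: "2.IH"(2))
      with True False show ?thesis by (intro "2.prems"(1)[of "S # pre" Q post]) auto
    qed
  qed
qed

lemma extend_block_at:
  "extend_block v b (open_blocks pre) (pre @ (Q, True) # post) = pre @ (Q @ [v], b) # post"
  by (induction pre) auto

lemma config_values: "config m s \<Longrightarrow> S \<in> set s \<Longrightarrow> x \<in> set (fst S) \<Longrightarrow> x \<in> {1..m}"
  unfolding config_def word_def by auto

lemma config_hd_less: "config m s \<Longrightarrow> T \<in> set s \<Longrightarrow> hd (fst T) < Suc m"
  using config_values[of m s T "hd (fst T)"] by (auto simp: config_def)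

lemma distinct_insert_max_iff:
  "distinct (xs @ Suc m # ys) \<and> set (xs @ Suc m # ys) = {1..Suc m}
     \<longleftrightarrow> distinct (xs @ ys) \<and> set (xs @ ys) = {1..m}"
proof -
  have "distinct (xs @ Suc m # ys) \<longleftrightarrow> distinct (xs @ ys) \<and> Suc m \<notin> set (xs @ ys)"
    by auto
  moreover have "set (xs @ Suc m # ys) = insert (Suc m) (set (xs @ ys))"
    by auto
  moreover have "{1..Suc m} = insert (Suc m) {1..m}"
    by (simp add: atLeastAtMostSuc_conv)
  moreover have "Suc m \<notin> {1..m}"
    by simp
  ultimately show ?thesis
    using insert_ident[of "Suc m" "set (xs @ ys)" "{1..m}"] by blast
qed

lemma config_insert:
  assumes "config m (pre @ post)" and "pre = [] \<or> snd (last pre)"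
  shows "config (Suc m) (pre @ ([Suc m], a) # post)"
proof -
  have "post = [] \<or> hd (fst (hd post)) < Suc m"
    using config_hd_less[OF assms(1)] by (cases post) auto
  moreover have "distinct (word pre @ Suc m # word post)
      \<and> set (word pre @ Suc m # word post) = {1..Suc m}"
    unfolding distinct_insert_max_iff using assms(1) by (simp add: config_def)
  ultimately show ?thesis
    using assms unfolding config_def by (auto simp: linked_append linked_Cons)
qed

lemma config_extend:
  assumes "config m (pre @ (Q, True) # post)"
  shows "config (Suc m) (pre @ (Q @ [Suc m], b) # post)"
proof -
  have "\<forall>x\<in>set Q. x < Suc m"
    using config_values[OF assms, of "(Q, True)"] by fastforce
  moreover have "post = [] \<or> hd (fst (hd post)) < Suc m"
    using config_hd_less[OF assms] by (cases post) auto
  moreover have "distinct ((word pre @ Q) @ Suc m # word post)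
      \<and> set ((word pre @ Q) @ Suc m # word post) = {1..Suc m}"
    unfolding distinct_insert_max_iff using assms by (simp add: config_def)
  ultimately show ?thesis
    using assms unfolding config_def by (auto simp: linked_append linked_Cons sorted_wrt_append)
qed

lemma config_children:
  assumes s: "config m s" and t: "t \<in> set (children s (Suc m))"
  shows "config (Suc m) t"
  using t unfolding in_children_iff
proof (elim disjE exE conjE)
  fix a g assume "g \<le> open_blocks s" "t = insert_block ([Suc m], a) g s"
  with s show ?thesis
    by (elim insert_block_split[where N = "([Suc m], a)"]) (auto intro: config_insert)
next
  fix b j assume "j < open_blocks s" "t = extend_block (Suc m) b j s"
  with s show ?thesis
    by (elim extend_block_split[where v = "Suc m" and b = b]) (auto intro: config_extend)
qed

lemma configs_sound: "s \<in> set (configs m) \<Longrightarrow> config m s"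
proof (induction m arbitrary: s)
  case 0
  then show ?case by (simp add: config_def)
next
  case (Suc m)
  then show ?case by (auto intro: config_children)
qed

lemma sorted_wrt_less_max_last:
  assumes "sorted_wrt (<) (xs :: 'a::linorder list)" and "\<forall>x\<in>set xs. x \<le> v" and "v \<in> set xs"
  shows "xs = butlast xs @ [v]"
proof (cases xs rule: rev_cases)
  case (snoc ys y)
  with assms have "v = y"
    by (auto simp: sorted_wrt_append)
  with snoc show ?thesis
    by simp
qed (use assms(3) in simp)

lemma config_parent:
  assumes t: "config (Suc m) t"
  obtains s where "config m s" "t \<in> set (children s (Suc m))"
proof -
  have "Suc m \<in> set (word t)"
    using t by (simp add: config_def)
  then obtain P a where "(P, a) \<in> set t" "Suc m \<in> set P"
    by (auto simp: word_def)
  then obtain pre post where t_eq: "t = pre @ (P, a) # post" and "Suc m \<in> set P"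
    by (meson split_list)
  have "\<forall>x\<in>set P. x \<le> Suc m"
    using config_values[OF t, of "(P, a)"] t_eq by auto
  with t t_eq \<open>Suc m \<in> set P\<close> have P: "P = butlast P @ [Suc m]"
    by (intro sorted_wrt_less_max_last) (auto simp: config_def)
  show ?thesis
  proof (cases "butlast P = []")
    case True
    then have t_eq: "t = pre @ ([Suc m], a) # post"
      using t_eq P by simp
    have pre: "pre = [] \<or> snd (last pre)"
    proof (rule ccontr)
      assume "\<not> (pre = [] \<or> snd (last pre))"
      then have "pre \<noteq> []" "Suc m < last (fst (last pre))"
        using t t_eq by (auto simp: config_def linked_append)
      moreover have "last (fst (last pre)) \<in> {1..Suc m}"
        using t t_eq \<open>pre \<noteq> []\<close> by (intro config_values[OF t, of "last pre"]) (auto simp: config_def)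
      ultimately show False by simp
    qed
    moreover have "config m (pre @ post)"
      using t distinct_insert_max_iff[of "word pre" m "word post"] \<open>pre = [] \<or> snd (last pre)\<close>
      unfolding t_eq config_def by (auto simp: linked_append linked_Cons)
    moreover have "t \<in> set (children (pre @ post) (Suc m))"
      using insert_block_in_children[of "open_blocks pre" "pre @ post" "Suc m" a]
      unfolding t_eq insert_block_at[OF pre] by simp
    ultimately show ?thesis
      using that by blast
  next
    case False
    define Q where "Q = butlast P"
    have t_eq: "t = pre @ (Q @ [Suc m], a) # post"
      using t_eq P by (simp add: Q_def)
    have "config m (pre @ (Q, True) # post)"
      using t distinct_insert_max_iff[of "word pre @ Q" m "word post"] False
      unfolding t_eq config_def Q_def by (auto simp: linked_append linked_Cons sorted_wrt_append)
    moreover have "t \<in> set (children (pre @ (Q, True) # post) (Suc m))"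
      using extend_block_in_children[of "open_blocks pre" "pre @ (Q, True) # post" "Suc m" a]
      unfolding t_eq extend_block_at by simp
    ultimately show ?thesis
      using that by blast
  qed
qed

lemma configs_complete: "config m s \<Longrightarrow> s \<in> set (configs m)"
proof (induction m arbitrary: s)
  case 0
  then show ?case by (cases s) (auto simp: config_def)
next
  case (Suc m)
  obtain s' where "config m s'" "s \<in> set (children s' (Suc m))"
    using config_parent[OF Suc.prems] .
  with Suc.IH show ?case by auto
qed

section \<open>The weight of a stage\<close>

text \<open>An open block will still receive a value larger than everything inserted so far.\<close>
definition will_separate :: "block \<Rightarrow> nat \<Rightarrow> bool" where
  "will_separate S x \<longleftrightarrow> (\<exists>z\<in>set (fst S). z < x) \<and> (snd S \<or> (\<exists>z\<in>set (fst S). x < z))"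

text \<open>An open block is never a singleton run, and its current last value is not the last one
  of its run; so the class of a value is final once it is inserted.\<close>
definition final_class :: "block \<Rightarrow> nat \<Rightarrow> rclass" where
  "final_class S x =
     (if length (fst S) = 1 \<and> \<not> snd S then Sing
      else if x = hd (fst S) then Op
      else if x = last (fst S) \<and> \<not> snd S then Clos
      else Cont)"

definition separated_weight :: "(rclass \<Rightarrow> nat) \<Rightarrow> block \<Rightarrow> block \<Rightarrow> nat" where
  "separated_weight \<gamma> S T = (\<Sum>x\<in>set (fst S). \<gamma> (final_class S x) * of_bool (will_separate T x))"

fun cross_weight :: "(rclass \<Rightarrow> nat) \<Rightarrow> (rclass \<Rightarrow> nat) \<Rightarrow> block list \<Rightarrow> nat" where
  "cross_weight \<alpha> \<beta> [] = 0"
| "cross_weight \<alpha> \<beta> (S # s) =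
     (\<Sum>T\<leftarrow>s. separated_weight \<beta> S T + separated_weight \<alpha> T S) + cross_weight \<alpha> \<beta> s"

definition weight :: "(rclass \<Rightarrow> nat) \<Rightarrow> (rclass \<Rightarrow> nat) \<Rightarrow> block list \<Rightarrow> nat" where
  "weight \<alpha> \<beta> s = (\<Sum>S\<leftarrow>s. length (fst S) - 1) + cross_weight \<alpha> \<beta> s"

definition values_below :: "nat \<Rightarrow> block \<Rightarrow> bool" where
  "values_below v S \<longleftrightarrow> fst S \<noteq> [] \<and> (\<forall>x\<in>set (fst S). x < v)"

lemma config_values_below: "config m s \<Longrightarrow> S \<in> set s \<Longrightarrow> values_below (Suc m) S"
  using config_values[of m s S] by (fastforce simp: values_below_def config_def)

lemma will_separate_max: "values_below v S \<Longrightarrow> will_separate S v = snd S"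
  by (cases S) (auto simp: will_separate_def values_below_def neq_Nil_conv)

lemma final_class_new: "final_class ([v], a) v = (if a then Op else Sing)"
  by (simp add: final_class_def)

lemma separated_weight_new_left:
  "values_below v T \<Longrightarrow> separated_weight \<gamma> ([v], a) T = \<gamma> (if a then Op else Sing) * of_bool (snd T)"
  by (simp add: separated_weight_def will_separate_max final_class_new)

lemma separated_weight_new_right:
  "values_below v S \<Longrightarrow> separated_weight \<gamma> S ([v], a) = 0"
  by (auto simp: separated_weight_def will_separate_def values_below_def)

lemma cross_weight_insert:
  assumes "\<forall>S\<in>set (pre @ post). values_below v S"
  shows "cross_weight \<alpha> \<beta> (pre @ ([v], a) # post) = cross_weight \<alpha> \<beta> (pre @ post)
    + \<alpha> (if a then Op else Sing) * open_blocks pre + \<beta> (if a then Op else Sing) * open_blocks post"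
  using assms
proof (induction pre)
  case Nil
  then have "(\<Sum>T\<leftarrow>post. separated_weight \<beta> ([v], a) T + separated_weight \<alpha> T ([v], a))
      = \<beta> (if a then Op else Sing) * open_blocks post"
    by (induction post) (simp_all add: separated_weight_new_left separated_weight_new_right)
  then show ?case by simp
next
  case (Cons S pre)
  then show ?case
    by (simp add: separated_weight_new_left separated_weight_new_right algebra_simps)
qed

lemma final_class_extend:
  assumes "values_below v (Q, True)"
  shows "y \<in> set Q \<Longrightarrow> final_class (Q @ [v], b) y = final_class (Q, True) y"
    and "final_class (Q @ [v], b) v = (if b then Cont else Clos)"
  using assms by (cases Q; auto simp: final_class_def values_below_def)+

lemma will_separate_extend:
  "Q \<noteq> [] \<Longrightarrow> x < v \<Longrightarrow> will_separate (Q @ [v], b) x = will_separate (Q, True) x"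
  by (auto simp: will_separate_def)

lemma separated_weight_extend_left:
  assumes "values_below v (Q, True)" and "values_below v T"
  shows "separated_weight \<gamma> (Q @ [v], b) T
    = separated_weight \<gamma> (Q, True) T + \<gamma> (if b then Cont else Clos) * of_bool (snd T)"
proof -
  have "v \<notin> set Q"
    using assms(1) by (auto simp: values_below_def)
  moreover have "(\<Sum>x\<in>set Q. \<gamma> (final_class (Q @ [v], b) x) * of_bool (will_separate T x))
      = (\<Sum>x\<in>set Q. \<gamma> (final_class (Q, True) x) * of_bool (will_separate T x))"
    by (intro sum.cong) (simp_all add: final_class_extend(1)[OF assms(1)])
  ultimately show ?thesis
    using final_class_extend(2)[OF assms(1)] will_separate_max[OF assms(2)]
    by (simp add: separated_weight_def del: sum_mult_of_bool_eq)
qed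

lemma separated_weight_extend_right:
  assumes "values_below v (Q, True)" and "values_below v S"
  shows "separated_weight \<gamma> S (Q @ [v], b) = separated_weight \<gamma> S (Q, True)"
  using assms will_separate_extend[of Q _ v b]
  unfolding separated_weight_def values_below_def by (intro sum.cong) auto

lemma cross_weight_extend:
  assumes "\<forall>S\<in>set (pre @ post). values_below v S" and "values_below v (Q, True)"
  shows "cross_weight \<alpha> \<beta> (pre @ (Q @ [v], b) # post) = cross_weight \<alpha> \<beta> (pre @ (Q, True) # post)
    + \<alpha> (if b then Cont else Clos) * open_blocks pre + \<beta> (if b then Cont else Clos) * open_blocks post"
  using assms(1)
proof (induction pre)
  case Nil
  then have "(\<Sum>T\<leftarrow>post. separated_weight \<beta> (Q @ [v], b) T + separated_weight \<alpha> T (Q @ [v], b))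
      = (\<Sum>T\<leftarrow>post. separated_weight \<beta> (Q, True) T + separated_weight \<alpha> T (Q, True))
        + \<beta> (if b then Cont else Clos) * open_blocks post"
    by (induction post)
      (simp_all add: separated_weight_extend_left separated_weight_extend_right assms(2))
  then show ?case by simp
next
  case (Cons S pre)
  then show ?case
    by (simp add: separated_weight_extend_left separated_weight_extend_right assms(2) algebra_simps)
qed

lemma insert_block_effect:
  assumes "g \<le> open_blocks s" and "\<forall>S\<in>set s. values_below v S"
  shows "weight \<alpha> \<beta> (insert_block ([v], a) g s) = weight \<alpha> \<beta> s
           + \<alpha> (if a then Op else Sing) * g + \<beta> (if a then Op else Sing) * (open_blocks s - g)"
    and "open_blocks (insert_block ([v], a) g s) = (if a then Suc (open_blocks s) else open_blocks s)"
proof -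
  obtain pre post where "s = pre @ post" "insert_block ([v], a) g s = pre @ ([v], a) # post"
    "open_blocks pre = g"
    using insert_block_split[OF assms(1)] .
  with assms(2) show "weight \<alpha> \<beta> (insert_block ([v], a) g s) = weight \<alpha> \<beta> s
           + \<alpha> (if a then Op else Sing) * g + \<beta> (if a then Op else Sing) * (open_blocks s - g)"
      and "open_blocks (insert_block ([v], a) g s) = (if a then Suc (open_blocks s) else open_blocks s)"
    by (simp_all add: weight_def cross_weight_insert)
qed

lemma extend_block_effect:
  assumes "j < open_blocks s" and "\<forall>S\<in>set s. values_below v S"
  shows "weight \<alpha> \<beta> (extend_block v b j s) = Suc (weight \<alpha> \<beta> s
           + \<alpha> (if b then Cont else Clos) * j + \<beta> (if b then Cont else Clos) * (open_blocks s - 1 - j))"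
    and "open_blocks (extend_block v b j s) = (if b then open_blocks s else open_blocks s - 1)"
proof -
  obtain pre Q post where s: "s = pre @ (Q, True) # post"
    and ext: "extend_block v b j s = pre @ (Q @ [v], b) # post" and "open_blocks pre = j"
    using extend_block_split[OF assms(1)] .
  moreover have "Q \<noteq> []"
    using assms(2) s by (auto simp: values_below_def)
  ultimately show "weight \<alpha> \<beta> (extend_block v b j s) = Suc (weight \<alpha> \<beta> s
           + \<alpha> (if b then Cont else Clos) * j + \<beta> (if b then Cont else Clos) * (open_blocks s - 1 - j))"
      and "open_blocks (extend_block v b j s) = (if b then open_blocks s else open_blocks s - 1)"
    using assms(2) by (simp_all add: weight_def cross_weight_extend)
qed

lemma sum_power_positions:
  assumes "(a, b) \<in> {(2, 1), (1, 2)}"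
  shows "(\<Sum>g<Suc h. (q::'a::comm_ring_1) ^ (a * g + b * (h - g))) = q ^ h * q_int (Suc h) q"
proof -
  have "(\<Sum>g<Suc h. q ^ (a * g + b * (h - g))) = (\<Sum>g<Suc h. q ^ h * q ^ g)"
  proof (cases "a = 2")
    case True
    with assms have "a * g + b * (h - g) = h + g" if "g < Suc h" for g
      using that by auto
    then show ?thesis
      by (intro sum.cong) (simp_all add: power_add)
  next
    case False
    with assms have "a * g + b * (h - g) = h + (h - g)" if "g < Suc h" for g
      using that by auto
    then have "(\<Sum>g<Suc h. q ^ (a * g + b * (h - g))) = (\<Sum>g<Suc h. q ^ h * q ^ (h - g))"
      by (intro sum.cong refl) (metis lessThan_iff power_add)
    also have "\<dots> = (\<Sum>g<Suc h. q ^ h * q ^ g)"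
      using sum.nat_diff_reindex[of "\<lambda>g. q ^ h * q ^ g" "Suc h"] by simp
    finally show ?thesis .
  qed
  also have "\<dots> = q ^ h * q_int (Suc h) q"
    by (simp only: q_int_def sum_distrib_left)
  finally show ?thesis .
qed

section \<open>Summing over the construction\<close>

lemma sum_list_map_concat: "(\<Sum>x\<leftarrow>concat xss. f x) = (\<Sum>xs\<leftarrow>xss. \<Sum>x\<leftarrow>xs. f x)"
  by (induction xss) auto

definition closed_configs :: "nat \<Rightarrow> block list list" where
  "closed_configs n = filter (\<lambda>s. open_blocks s = 0) (configs n)"

context
  fixes \<alpha> \<beta> :: "rclass \<Rightarrow> nat" and q :: "'a::comm_ring_1"
  assumes weights: "\<And>X. (\<alpha> X, \<beta> X) \<in> {(2, 1), (1, 2)}"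
begin

lemma sum_insert_block:
  assumes "\<forall>S\<in>set s. values_below v S"
  shows "(\<Sum>t\<leftarrow>map (\<lambda>g. insert_block ([v], a) g s) [0..<Suc (open_blocks s)].
            q ^ weight \<alpha> \<beta> t * completions q k (open_blocks t))
       = q ^ weight \<alpha> \<beta> s * completions q k (if a then Suc (open_blocks s) else open_blocks s)
           * (q ^ open_blocks s * q_int (Suc (open_blocks s)) q)"
proof -
  let ?h = "open_blocks s" and ?X = "if a then Op else Sing"
  let ?c = "q ^ weight \<alpha> \<beta> s * completions q k (if a then Suc ?h else ?h)"
  have "(\<Sum>t\<leftarrow>map (\<lambda>g. insert_block ([v], a) g s) [0..<Suc ?h].
            q ^ weight \<alpha> \<beta> t * completions q k (open_blocks t))
      = (\<Sum>g<Suc ?h. ?c * q ^ (\<alpha> ?X * g + \<beta> ?X * (?h - g)))"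
    unfolding map_map interv_sum_list_conv_sum_set_nat set_upt atLeast0LessThan
    by (intro sum.cong refl) (simp add: insert_block_effect[OF _ assms] power_add)
  also have "\<dots> = ?c * (q ^ ?h * q_int (Suc ?h) q)"
    by (simp only: sum_distrib_left[symmetric] sum_power_positions[OF weights])
  finally show ?thesis .
qed

lemma sum_extend_block:
  assumes "\<forall>S\<in>set s. values_below v S"
  shows "(\<Sum>t\<leftarrow>map (\<lambda>j. extend_block v b j s) [0..<open_blocks s].
            q ^ weight \<alpha> \<beta> t * completions q k (open_blocks t))
       = q ^ weight \<alpha> \<beta> s * completions q k (if b then open_blocks s else open_blocks s - 1)
           * (q ^ open_blocks s * q_int (open_blocks s) q)"
proof (cases "open_blocks s")
  case 0
  then show ?thesis by simp
next
  case (Suc h)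
  let ?X = "if b then Cont else Clos"
  let ?c = "q ^ weight \<alpha> \<beta> s * completions q k (if b then open_blocks s else open_blocks s - 1)"
  have "(\<Sum>t\<leftarrow>map (\<lambda>j. extend_block v b j s) [0..<open_blocks s].
            q ^ weight \<alpha> \<beta> t * completions q k (open_blocks t))
      = (\<Sum>j<Suc h. ?c * q * q ^ (\<alpha> ?X * j + \<beta> ?X * (h - j)))"
    unfolding map_map interv_sum_list_conv_sum_set_nat set_upt atLeast0LessThan Suc
    by (intro sum.cong refl) (simp add: extend_block_effect[OF _ assms] Suc power_add)
  also have "\<dots> = ?c * (q ^ Suc h * q_int (Suc h) q)"
    by (simp only: sum_distrib_left[symmetric] sum_power_positions[OF weights]) (simp add: ac_simps)
  finally show ?thesis
    using Suc by simp
qed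

lemma children_completions:
  assumes "config m s"
  shows "(\<Sum>t\<leftarrow>children s (Suc m). q ^ weight \<alpha> \<beta> t * completions q k (open_blocks t))
       = q ^ weight \<alpha> \<beta> s * completions q (Suc k) (open_blocks s)"
proof -
  have below: "\<forall>S\<in>set s. values_below (Suc m) S"
    using config_values_below[OF assms] by blast
  show ?thesis
    unfolding children_def map_append sum_list_append
      sum_insert_block[OF below] sum_extend_block[OF below] completions_step[of q k]
    by (simp add: algebra_simps)
qed

lemma configs_completions:
  "m \<le> n \<Longrightarrow> (\<Sum>s\<leftarrow>configs m. q ^ weight \<alpha> \<beta> s * completions q (n - m) (open_blocks s)) = q_fact n q"
proof (induction m)
  case 0
  then show ?case
    by (simp add: weight_def completions_0_right)
next
  case (Suc m)
  have "(\<Sum>s\<leftarrow>configs (Suc m). q ^ weight \<alpha> \<beta> s * completions q (n - Suc m) (open_blocks s))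
      = (\<Sum>s\<leftarrow>configs m. q ^ weight \<alpha> \<beta> s * completions q (Suc (n - Suc m)) (open_blocks s))"
    by (simp add: sum_list_map_concat children_completions configs_sound cong: map_cong)
  also have "\<dots> = q_fact n q"
    using Suc by (simp add: Suc_diff_Suc)
  finally show ?case .
qed

lemma closed_configs_sum: "(\<Sum>s\<leftarrow>closed_configs n. q ^ weight \<alpha> \<beta> s) = q_fact n q"
proof -
  have "(\<Sum>s\<leftarrow>closed_configs n. q ^ weight \<alpha> \<beta> s)
      = (\<Sum>s\<leftarrow>configs n. q ^ weight \<alpha> \<beta> s * completions q 0 (open_blocks s))"
    unfolding closed_configs_def sum_list_map_filter' by (intro arg_cong[where f = sum_list] map_cong) auto
  also have "\<dots> = q_fact n q"
    using configs_completions[of n n] by simp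
  finally show ?thesis .
qed

end

section \<open>Runs of a permutation\<close>

lemma runs_append:
  assumes "P \<noteq> []" "sorted_wrt (<) P" "ys = [] \<or> hd ys < last P"
  shows "runs (P @ ys) = P # runs ys"
  using assms
proof (induction P)
  case (Cons x P)
  show ?case
  proof (cases P)
    case Nil
    with Cons.prems show ?thesis by (cases ys) auto
  next
    case (Cons y P')
    with Cons.prems Cons.IH show ?thesis by simp
  qed
qed simp

lemma runs_word:
  assumes "\<forall>S\<in>set s. fst S \<noteq> [] \<and> sorted_wrt (<) (fst S)" "linked s" "\<forall>S\<in>set s. \<not> snd S"
  shows "runs (word s) = map fst s"
  using assms
proof (induction s)
  case (Cons S s)
  have "word s = [] \<or> hd (word s) < last (fst S)"
    using Cons.prems by (cases s) (auto simp: linked_Cons)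
  with Cons show ?case by (simp add: runs_append linked_Cons)
qed simp

lemma concat_runs: "concat (runs xs) = xs"
  by (induction xs rule: runs.induct) (auto split: list.splits)

lemma runs_Cons: "\<exists>r rs. runs (y # zs) = (y # r) # rs"
proof (induction zs arbitrary: y)
  case (Cons z zs)
  then obtain r rs where "runs (z # zs) = (z # r) # rs"
    by blast
  then show ?case by auto
qed simp

lemma runs_sorted: "r \<in> set (runs xs) \<Longrightarrow> r \<noteq> [] \<and> sorted_wrt (<) r"
proof (induction xs arbitrary: r rule: runs.induct)
  case (3 x y zs)
  obtain r' rs where rs: "runs (y # zs) = (y # r') # rs"
    using runs_Cons by blast
  show ?case
  proof (cases "x < y")
    case True
    have "sorted_wrt (<) (y # r')"
      using "3.IH"(1)[OF True, of "y # r'"] rs by simp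
    with True have "sorted_wrt (<) (x # y # r')"
      by (auto intro: order.strict_trans)
    with True rs "3.IH"(1)[OF True] "3.prems" show ?thesis
      by auto
  next
    case False
    with "3.IH"(2) "3.prems" show ?thesis
      by auto
  qed
qed auto

lemma linked_runs: "distinct xs \<Longrightarrow> linked (map (\<lambda>r. (r, False)) (runs xs))"
proof (induction xs rule: runs.induct)
  case (3 x y zs)
  obtain r rs where rs: "runs (y # zs) = (y # r) # rs"
    using runs_Cons by blast
  have "linked (map (\<lambda>r. (r, False)) ((y # r) # rs))"
    using 3 rs by (cases "x < y") auto
  with "3.prems" rs show ?case
    by (cases "x < y") (auto simp: linked_Cons)
qed auto

definition run_blocks :: "nat list \<Rightarrow> block list" where
  "run_blocks \<sigma> = map (\<lambda>r. (r, False)) (runs \<sigma>)"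

lemma word_run_blocks: "word (run_blocks \<sigma>) = \<sigma>"
  by (simp add: run_blocks_def word_def o_def concat_runs)

lemma config_run_blocks: "\<sigma> \<in> permutations_of_set {1..n} \<Longrightarrow> config n (run_blocks \<sigma>)"
  unfolding config_def word_run_blocks
  by (auto simp: run_blocks_def permutations_of_set_def dest: runs_sorted intro: linked_runs)

lemma run_blocks_word: "config n s \<Longrightarrow> open_blocks s = 0 \<Longrightarrow> run_blocks (word s) = s"
  by (auto simp: run_blocks_def config_def open_blocks_eq_0_iff runs_word intro!: map_idI)

text \<open>The cross weight indexed like the definitions of \<^const>\<open>lsg\<close> and \<^const>\<open>rsg\<close>.\<close>
definition index_weight :: "(rclass \<Rightarrow> nat) \<Rightarrow> (rclass \<Rightarrow> nat) \<Rightarrow> block list \<Rightarrow> nat" where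
  "index_weight \<alpha> \<beta> s = (\<Sum>k<length s. \<Sum>x\<in>set (fst (s ! k)).
      \<alpha> (final_class (s ! k) x) * (\<Sum>j<k. of_bool (will_separate (s ! j) x))
    + \<beta> (final_class (s ! k) x) * (\<Sum>j\<in>{Suc k..<length s}. of_bool (will_separate (s ! j) x)))"

lemma cross_weight_eq_index_weight: "cross_weight \<alpha> \<beta> s = index_weight \<alpha> \<beta> s"
proof (induction s)
  case Nil
  then show ?case by (simp add: index_weight_def)
next
  case (Cons S s)
  let ?sep = "\<lambda>j x. of_bool (will_separate (s ! j) x) :: nat"
  have "index_weight \<alpha> \<beta> (S # s)
      = (\<Sum>x\<in>set (fst S). \<beta> (final_class S x) * (\<Sum>j<length s. ?sep j x))
      + (\<Sum>k<length s. \<Sum>x\<in>set (fst (s ! k)).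
           \<alpha> (final_class (s ! k) x) * (of_bool (will_separate S x) + (\<Sum>j<k. ?sep j x))
         + \<beta> (final_class (s ! k) x) * (\<Sum>j\<in>{Suc k..<length s}. ?sep j x))"
    unfolding index_weight_def
    by (simp only: length_Cons sum.lessThan_Suc_shift nth_Cons_0 nth_Cons_Suc sum.shift_bounds_Suc_ivl
        atLeast0LessThan) simp
  also have "\<dots> = (\<Sum>k<length s. separated_weight \<beta> S (s ! k) + separated_weight \<alpha> (s ! k) S)
      + index_weight \<alpha> \<beta> s"
    unfolding index_weight_def separated_weight_def
    by (simp add: algebra_simps sum.distrib sum_distrib_left sum.swap[of _ "set (fst S)"]
        del: sum_mult_of_bool_eq sum_of_bool_eq)
  finally show ?case
    using Cons by (simp add: sum_list_sum_nth atLeast0LessThan)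
qed

lemma nth_concat_disjoint:
  assumes "distinct (concat xss)" "[] \<notin> set xss" "i < length xss" "j < length xss"
    "x \<in> set (xss ! i)" "x \<in> set (xss ! j)"
  shows "i = j"
proof (rule ccontr)
  assume "i \<noteq> j"
  have "distinct xss"
    using assms(1,2) by (simp add: distinct_concat_iff removeAll_id)
  with \<open>i \<noteq> j\<close> assms(3,4) have "xss ! i \<noteq> xss ! j"
    by (simp add: nth_eq_iff_index_eq)
  with assms show False
    using distinct_concat_iff[of xss] nth_mem by blast
qed

context
  fixes \<sigma> :: "nat list"
  assumes dist: "distinct \<sigma>"
begin

lemma runs_index_unique:
  "k < length (runs \<sigma>) \<Longrightarrow> k' < length (runs \<sigma>) \<Longrightarrow> x \<in> set (runs \<sigma> ! k)
    \<Longrightarrow> x \<in> set (runs \<sigma> ! k') \<Longrightarrow> k' = k"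
  using nth_concat_disjoint[of "runs \<sigma>"] dist runs_sorted concat_runs by metis

lemma run_idx_runs: "k < length (runs \<sigma>) \<Longrightarrow> x \<in> set (runs \<sigma> ! k) \<Longrightarrow> run_idx \<sigma> x = k"
  unfolding run_idx_def by (rule the_equality) (auto intro: runs_index_unique)

lemma lsg_runs:
  "k < length (runs \<sigma>) \<Longrightarrow> x \<in> set (runs \<sigma> ! k)
    \<Longrightarrow> lsg \<sigma> x = (\<Sum>j<k. of_bool (separates (runs \<sigma> ! j) x))"
  unfolding lsg_def by (simp add: run_idx_runs Int_def)

lemma rsg_runs:
  "k < length (runs \<sigma>) \<Longrightarrow> x \<in> set (runs \<sigma> ! k)
    \<Longrightarrow> rsg \<sigma> x = (\<Sum>j\<in>{Suc k..<length (runs \<sigma>)}. of_bool (separates (runs \<sigma> ! j) x))"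
  unfolding rsg_def by (simp add: run_idx_runs Int_def Suc_le_eq conj_assoc)

lemma runs_unique:
  "r \<in> set (runs \<sigma>) \<Longrightarrow> r' \<in> set (runs \<sigma>) \<Longrightarrow> x \<in> set r \<Longrightarrow> x \<in> set r' \<Longrightarrow> r' = r"
  by (metis in_set_conv_nth runs_index_unique)

lemma class_set_runs:
  assumes r: "r \<in> set (runs \<sigma>)" and x: "x \<in> set r"
  shows "x \<in> class_set X \<sigma> \<longleftrightarrow> X = final_class (r, False) x"
proof -
  have mem: "x \<in> {f r' | r'. r' \<in> set (runs \<sigma>) \<and> P r'} \<longleftrightarrow> P r \<and> x = f r"
    if "\<And>r'. P r' \<Longrightarrow> f r' \<in> set r'" for f P
    using that r x runs_unique by blast
  have "x \<in> set \<sigma>" "r \<noteq> []" "distinct r"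
    using r x dist concat_runs[of \<sigma>] runs_sorted[OF r]
    by (metis UN_I set_concat, blast, metis distinct_concat_iff)
  then have "length r \<noteq> 1 \<Longrightarrow> 2 \<le> length r" "2 \<le> length r \<Longrightarrow> hd r \<noteq> last r"
    by (cases r rule: remdups_adj.cases; auto)+
  moreover have "x = hd r" if "length r = 1"
    using x that by (cases r) auto
  moreover have "x \<in> {hd r' | r'. r' \<in> set (runs \<sigma>) \<and> 2 \<le> length r'} \<longleftrightarrow> 2 \<le> length r \<and> x = hd r"
    by (rule mem) (auto intro: hd_in_set)
  moreover have "x \<in> {last r' | r'. r' \<in> set (runs \<sigma>) \<and> 2 \<le> length r'} \<longleftrightarrow> 2 \<le> length r \<and> x = last r"
    by (rule mem) (auto intro: last_in_set)
  moreover have "x \<in> {hd r' | r'. r' \<in> set (runs \<sigma>) \<and> length r' = 1} \<longleftrightarrow> length r = 1 \<and> x = hd r"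
    by (rule mem) (auto intro: hd_in_set)
  ultimately show ?thesis
    using \<open>x \<in> set \<sigma>\<close> unfolding class_set_def final_class_def
    by (cases X) auto
qed

lemma class_set_subset: "class_set X \<sigma> \<subseteq> set \<sigma>"
proof -
  have "hd r \<in> set \<sigma> \<and> last r \<in> set \<sigma>" if "r \<in> set (runs \<sigma>)" for r
    using that runs_sorted[OF that] concat_runs[of \<sigma>]
    by (metis UN_I hd_in_set last_in_set set_concat)
  then show ?thesis
    unfolding class_set_def by (cases X) auto
qed

lemma sum_classes_eq_index_weight:
  "(\<Sum>X\<in>{Sing, Cont, Op, Clos}. \<alpha> X * lsgX X \<sigma> + \<beta> X * rsgX X \<sigma>) = index_weight \<alpha> \<beta> (run_blocks \<sigma>)"
proof -
  let ?rs = "runs \<sigma>"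
  define c where "c x = final_class (?rs ! run_idx \<sigma> x, False) x" for x
  define F where "F x = \<alpha> (c x) * lsg \<sigma> x + \<beta> (c x) * rsg \<sigma> x" for x
  have in_runs: "x \<in> set \<sigma> \<longleftrightarrow> (\<exists>k<length ?rs. x \<in> set (?rs ! k))" for x
    using concat_runs[of \<sigma>] by (metis in_set_conv_nth set_concat UN_iff nth_mem)
  have classes: "class_set X \<sigma> = {x \<in> set \<sigma>. c x = X}" for X
  proof -
    have "x \<in> class_set X \<sigma> \<longleftrightarrow> c x = X" if "x \<in> set \<sigma>" for x
      using that in_runs class_set_runs run_idx_runs unfolding c_def by (metis nth_mem)
    then show ?thesis
      using class_set_subset by blast
  qed
  have all_classes: "c ` set \<sigma> \<subseteq> {Sing, Cont, Op, Clos}"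
    using rclass.exhaust by blast
  have "(\<Sum>X\<in>{Sing, Cont, Op, Clos}. \<alpha> X * lsgX X \<sigma> + \<beta> X * rsgX X \<sigma>)
      = (\<Sum>X\<in>{Sing, Cont, Op, Clos}. \<Sum>x\<in>{x \<in> set \<sigma>. c x = X}. F x)"
    unfolding lsgX_def rsgX_def classes F_def
    by (intro sum.cong refl) (simp add: sum_distrib_left sum.distrib)
  also have "\<dots> = (\<Sum>x\<in>set \<sigma>. F x)"
    by (rule sum.group[OF finite_set _ all_classes]) simp
  also have "\<dots> = (\<Sum>k<length ?rs. \<Sum>x\<in>set (?rs ! k). F x)"
  proof -
    have "set \<sigma> = (\<Union>k<length ?rs. set (?rs ! k))"
      using in_runs by blast
    moreover have "set (?rs ! i) \<inter> set (?rs ! j) = {}" if "i < length ?rs" "j < length ?rs" "i \<noteq> j" for i j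
      using that runs_index_unique by blast
    ultimately show ?thesis
      by (simp add: sum.UNION_disjoint)
  qed
  also have "\<dots> = index_weight \<alpha> \<beta> (run_blocks \<sigma>)"
    unfolding index_weight_def run_blocks_def
    by (intro sum.cong refl)
      (simp_all add: F_def c_def run_idx_runs lsg_runs rsg_runs will_separate_def separates_def)
  finally show ?thesis .
qed

lemma weight_run_blocks:
  "weight \<alpha> \<beta> (run_blocks \<sigma>)
     = length \<sigma> - run \<sigma> + (\<Sum>X\<in>{Sing, Cont, Op, Clos}. \<alpha> X * lsgX X \<sigma> + \<beta> X * rsgX X \<sigma>)"
proof -
  have "(\<Sum>r\<leftarrow>rs. length r - 1) + length rs = length (concat rs)" if "[] \<notin> set rs" for rs :: "nat list list"
    using that by (induction rs) (auto simp: Suc_diff_le Suc_leI)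
  from this[of "runs \<sigma>"] have "(\<Sum>S\<leftarrow>run_blocks \<sigma>. length (fst S) - 1) = length \<sigma> - run \<sigma>"
    using runs_sorted concat_runs[of \<sigma>] by (fastforce simp: run_blocks_def run_def o_def)
  then show ?thesis
    by (simp add: weight_def cross_weight_eq_index_weight sum_classes_eq_index_weight)
qed

end

lemma inj_on_run_blocks: "inj_on run_blocks A"
  by (metis inj_onI word_run_blocks)

lemma set_closed_configs: "set (closed_configs n) = run_blocks ` permutations_of_set {1..n}"
proof
  show "set (closed_configs n) \<subseteq> run_blocks ` permutations_of_set {1..n}"
  proof
    fix s assume "s \<in> set (closed_configs n)"
    then have "config n s" "open_blocks s = 0"
      by (auto simp: closed_configs_def configs_sound)
    then have "s = run_blocks (word s)" "word s \<in> permutations_of_set {1..n}"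
      by (simp_all add: run_blocks_word) (simp add: config_def permutations_of_set_def)
    then show "s \<in> run_blocks ` permutations_of_set {1..n}"
      by blast
  qed
  show "run_blocks ` permutations_of_set {1..n} \<subseteq> set (closed_configs n)"
    using config_run_blocks configs_complete
    by (auto simp: closed_configs_def open_blocks_eq_0_iff run_blocks_def)
qed

text \<open>At \<open>q = 1\<close> the generating function counts the closed stages (for any admissible
  weights), so there are \<open>n!\<close> of them, one for each permutation.\<close>
lemma distinct_closed_configs: "distinct (closed_configs n)"
proof -
  have "int (length (closed_configs n)) = int (fact n)"
    using closed_configs_sum[of "\<lambda>_. 2" "\<lambda>_. 1" "1 :: int" n]
    by (simp add: sum_list_triv q_fact_1 del: of_nat_fact)
  moreover have "card (set (closed_configs n)) = fact n"
    by (simp add: set_closed_configs card_image inj_on_run_blocks)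
  ultimately show ?thesis
    by (simp add: card_distinct del: of_nat_fact)
qed

theorem mainTheorem2:
  fixes \<alpha> \<beta> :: "rclass \<Rightarrow> nat" and n :: nat and q :: "'a::comm_ring_1"
  assumes "\<And>X. (\<alpha> X, \<beta> X) \<in> {(2, 1), (1, 2)}"
    and "n \<ge> 1"
  shows "(\<Sum>\<sigma>\<in>permutations_of_set {1..n}.
            q ^ (n - run \<sigma> + (\<Sum>X\<in>{Sing, Cont, Op, Clos}. \<alpha> X * lsgX X \<sigma> + \<beta> X * rsgX X \<sigma>)))
         = q_fact n q"
proof -
  let ?perms = "permutations_of_set {1..n}"
  have "(\<Sum>\<sigma>\<in>?perms.
          q ^ (n - run \<sigma> + (\<Sum>X\<in>{Sing, Cont, Op, Clos}. \<alpha> X * lsgX X \<sigma> + \<beta> X * rsgX X \<sigma>)))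
      = (\<Sum>\<sigma>\<in>?perms. q ^ weight \<alpha> \<beta> (run_blocks \<sigma>))"
    by (intro sum.cong refl)
      (auto simp: weight_run_blocks permutations_of_set_def distinct_card[symmetric])
  also have "\<dots> = (\<Sum>s\<in>set (closed_configs n). q ^ weight \<alpha> \<beta> s)"
    by (simp add: set_closed_configs sum.reindex inj_on_run_blocks)
  also have "\<dots> = (\<Sum>s\<leftarrow>closed_configs n. q ^ weight \<alpha> \<beta> s)"
    by (simp add: distinct_closed_configs sum_list_distinct_conv_sum_set)
  also have "\<dots> = q_fact n q"
    using closed_configs_sum[of \<alpha> \<beta> q n, OF assms(1)] .
  finally show ?thesis .
qed

end
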